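(* For $1\le\ell\le r$ let \[ F_\ell(n)=z_\ell^n n^{q_\ell}\prod_{j=1}^{m_\ell}\mathcal H_{\alpha_{\ell,j}}(p_{\ell,j}n)^{e_{\ell,j}}, \] where $z_\ell,q_\ell\in\mathbb C$, $p_{\ell,j}\in\mathbb Z_{>0}$, $e_{\ell,j}\in\mathbb Z_{\ge0}$ and each $\alpha_{\ell,j}$ is a word. Let $L=\operatorname{lcm}\{p_{\ell,j}\}$ (with $L=1$ if this set is empty). Then for every positive integer $k$, \[ S_r(k)=\sum_{n_r=1}^{k}\sum_{n_{r-1}=1}^{n_r}\cdots\sum_{n_1=1}^{n_2}\prod_{\ell=1}^{r}F_\ell(n_\ell)\in\operatorname{span}_{\mathbb C}\{\mathcal H_\beta(Lk)\}_\beta, \] where $\beta$ ranges over words.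
   Context: A letter is a pair $(r,s)\in\mathbb C^2$ and a word is a finite sequence of letters. For a word $\alpha=((r_1,s_1),\ldots,(r_d,s_d))$ and a positive integer $N$, \[ \mathcal H_{\alpha}(N)=\sum_{N\ge n_1>\cdots>n_d\ge1}\prod_{i=1}^{d}\frac{s_i^{n_i}}{n_i^{r_i}},\qquad \mathcal H_\emptyset(N)=1, \] with $n^r=\exp(r\log n)$ using the real logarithm. *)

theory Defs
  imports "HOL-Analysis.Analysis"
begin

type_synonym letter = "complex \<times> complex"
type_synonym word = "letter list"

text \<open>H_alpha(N): sum over N >= n_1 > ... > n_d >= 1 of prod s_i^n_i / n_i^r_i,
  with n^r = exp(r log n) (complex powr of a positive real uses the real log).
  The tuple (n_1,...,n_d) is the list ns, ns!(i-1) = n_i.\<close>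
definition H :: "word \<Rightarrow> nat \<Rightarrow> complex" where
  "H w N = (\<Sum>ns\<in>{ns::nat list. length ns = length w \<and> sorted_wrt (>) ns \<and> set ns \<subseteq> {1..N}}.
             \<Prod>i<length w. (snd (w!i)) ^ (ns!i) / ((of_nat (ns!i) :: complex) powr (fst (w!i) :: complex)))"

end

theory Submission
  imports Defs
begin

(* The functions N \<mapsto> H_beta(N) span a space V of functions nat \<Rightarrow> complex which is closed
   under products (quasi-shuffle relation for the product of two nested sums) and under the
   partial-sum operators g \<mapsto> (N \<mapsto> sum_{n=1..N} s^n n^-r g(n-1)) and
   g \<mapsto> (N \<mapsto> sum_{n=1..N} s^n n^-r g(n)).
   The roots-of-unity filter sum_{j<d} w^(j m) = d [d dvd m] rewrites a sum over the multiples
   of d as a combination of such partial sums, so V is also closed under N \<mapsto> g(N div d) and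
   g \<mapsto> (N \<mapsto> sum_{n <= N div d} s^n n^-r g(d n)).
   Since p_{l,j} n = (L n) div (L / p_{l,j}), each F_l(n) is z_l^n n^(q_l) G_l(L n) with G_l in V,
   and induction on the depth gives S_l(k) = g_l(L k) with g_l in V. *)

definition letter_term :: "letter \<Rightarrow> nat \<Rightarrow> complex" where
  "letter_term x n = snd x ^ n / (of_nat n :: complex) powr fst x"

definition letter_mult :: "letter \<Rightarrow> letter \<Rightarrow> letter" where
  "letter_mult x y = (fst x + fst y, snd x * snd y)"

lemma letter_term_mult: "letter_term x n * letter_term y n = letter_term (letter_mult x y) n"
  unfolding letter_term_def letter_mult_def by (simp add: powr_add power_mult_distrib)

lemma letter_term_neg: "letter_term (- q, z) n = z ^ n * (of_nat n :: complex) powr q"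
  unfolding letter_term_def by (simp add: powr_minus divide_inverse)

definition strict_chains :: "nat \<Rightarrow> nat \<Rightarrow> nat list set" where
  "strict_chains d N = {ns. length ns = d \<and> sorted_wrt (>) ns \<and> set ns \<subseteq> {1..N}}"

lemma H_eq_sum_strict_chains:
  "H w N = (\<Sum>ns\<in>strict_chains (length w) N. \<Prod>i<length w. letter_term (w!i) (ns!i))"
  unfolding H_def strict_chains_def letter_term_def ..

lemma finite_strict_chains: "finite (strict_chains d N)"
  by (rule finite_subset[OF _ finite_lists_length_eq[of "{1..N}" d]]) (auto simp: strict_chains_def)

lemma strict_chains_0: "strict_chains 0 N = {[]}"
  by (auto simp: strict_chains_def)

lemma strict_chains_Suc:
  "strict_chains (Suc d) N = (\<lambda>(n, ns). n # ns) ` (SIGMA n:{1..N}. strict_chains d (n - 1))"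
proof (intro equalityI subsetI)
  fix xs assume "xs \<in> strict_chains (Suc d) N"
  then obtain n ns where "xs = n # ns" "n \<in> {1..N}" "ns \<in> strict_chains d (n - 1)"
    unfolding strict_chains_def by (cases xs) fastforce+
  then show "xs \<in> (\<lambda>(n, ns). n # ns) ` (SIGMA n:{1..N}. strict_chains d (n - 1))" by force
qed (force simp: strict_chains_def subset_iff)

lemma H_Nil: "H [] N = 1"
  by (simp add: H_eq_sum_strict_chains strict_chains_0)

lemma H_Cons: "H (x # w) N = (\<Sum>n=1..N. letter_term x n * H w (n - 1))"
proof -
  have inj: "inj_on (\<lambda>(n, ns). n # ns) (SIGMA n:{1..N}. strict_chains (length w) (n - 1))"
    by (auto simp: inj_on_def)
  show ?thesis
    unfolding H_eq_sum_strict_chains length_Cons strict_chains_Suc sum.reindex[OF inj]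
    by (simp add: sum.Sigma finite_strict_chains sum_distrib_left split_def
        prod.lessThan_Suc_shift del: prod.lessThan_Suc)
qed

lemma H_Cons_pred: "0 < N \<Longrightarrow> H (x # w) N = H (x # w) (N - 1) + letter_term x N * H w (N - 1)"
  by (cases N) (simp_all add: H_Cons)

inductive H_span :: "(nat \<Rightarrow> complex) \<Rightarrow> bool" where
  H_span_H: "H_span (H w)"
| H_span_zero: "H_span (\<lambda>N. 0)"
| H_span_add: "H_span f \<Longrightarrow> H_span g \<Longrightarrow> H_span (\<lambda>N. f N + g N)"
| H_span_scale: "H_span f \<Longrightarrow> H_span (\<lambda>N. c * f N)"

lemma H_span_finite_combination:
  assumes "H_span f"
  shows "\<exists>B c. finite B \<and> (\<forall>N. f N = (\<Sum>\<beta>\<in>B. c \<beta> * H \<beta> N))"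
  using assms
proof induction
  case (H_span_H w)
  show ?case by (intro exI[of _ "{w}"] exI[of _ "\<lambda>_. 1"]) simp
next
  case H_span_zero
  show ?case by (intro exI[of _ "{}"]) simp
next
  case (H_span_add f g)
  then obtain B1 c1 B2 c2 where B1: "finite B1" "\<And>N. f N = (\<Sum>\<beta>\<in>B1. c1 \<beta> * H \<beta> N)"
    and B2: "finite B2" "\<And>N. g N = (\<Sum>\<beta>\<in>B2. c2 \<beta> * H \<beta> N)"
    by blast
  have extend:
    "(\<Sum>\<beta>\<in>B. c \<beta> * H \<beta> N) = (\<Sum>\<beta>\<in>B1 \<union> B2. (if \<beta> \<in> B then c \<beta> else 0) * H \<beta> N)"
    if "B \<subseteq> B1 \<union> B2" for B c N
    using that B1(1) B2(1) by (intro sum.mono_neutral_cong_left) auto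
  show ?case
    by (intro exI[of _ "B1 \<union> B2"]
        exI[of _ "\<lambda>\<beta>. (if \<beta> \<in> B1 then c1 \<beta> else 0) + (if \<beta> \<in> B2 then c2 \<beta> else 0)"])
      (simp add: B1 B2 extend[of B1] extend[of B2] distrib_right sum.distrib)
next
  case (H_span_scale f c)
  then obtain B c' where "finite B" "\<And>N. f N = (\<Sum>\<beta>\<in>B. c' \<beta> * H \<beta> N)"
    by blast
  then show ?case
    by (intro exI[of _ B] exI[of _ "\<lambda>\<beta>. c * c' \<beta>"]) (simp add: sum_distrib_left mult.assoc)
qed

lemma H_span_cong: "H_span f \<Longrightarrow> (\<And>N. f N = g N) \<Longrightarrow> H_span g"
  by (metis ext)

lemma H_span_const: "H_span (\<lambda>N. c)"
  using H_span_scale[OF H_span_H[of "[]"], of c] by (simp add: H_Nil)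

lemma H_span_sum:
  "finite I \<Longrightarrow> (\<And>i. i \<in> I \<Longrightarrow> H_span (g i)) \<Longrightarrow> H_span (\<lambda>N. \<Sum>i\<in>I. g i N)"
  by (induction I rule: finite_induct) (simp_all add: H_span_zero H_span_add)

lemma H_span_linear_image:
  fixes T :: "(nat \<Rightarrow> complex) \<Rightarrow> nat \<Rightarrow> complex"
  assumes "H_span f"
    and H: "\<And>w. H_span (T (H w))"
    and add: "\<And>f g. T (\<lambda>N. f N + g N) = (\<lambda>N. T f N + T g N)"
    and scale: "\<And>c f. T (\<lambda>N. c * f N) = (\<lambda>N. c * T f N)"
  shows "H_span (T f)"
  using assms(1)
proof induction
  case H_span_zero
  show ?case using scale[of 0 "\<lambda>N. 0"] by (simp add: H_span.H_span_zero)
qed (simp_all add: H add scale H_span.H_span_add H_span.H_span_scale)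

lemma H_span_strict_sum:
  assumes "H_span g"
  shows "H_span (\<lambda>N. \<Sum>n=1..N. letter_term x n * g (n - 1))"
  using assms
proof (rule H_span_linear_image[where T = "\<lambda>g N. \<Sum>n=1..N. letter_term x n * g (n - 1)"])
  show "H_span (\<lambda>N. \<Sum>n=1..N. letter_term x n * H w (n - 1))" for w
    by (rule H_span_cong[OF H_span_H]) (rule H_Cons)
qed (simp_all add: sum.distrib sum_distrib_left distrib_left mult.left_commute)

lemma H_span_weak_sum_H: "H_span (\<lambda>N. \<Sum>n=1..N. letter_term x n * H \<beta> n)"
proof (cases \<beta>)
  case Nil
  show ?thesis by (rule H_span_cong[OF H_span_H[of "[x]"]]) (simp add: Nil H_Cons H_Nil)
next
  case (Cons y w)
  \<comment> \<open>with n' the top index of \<beta>, n \<ge> n' splits into n > n' and n = n'; equal indices merge x and y.\<close>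
  have "(\<Sum>n=1..N. letter_term x n * H \<beta> n) =
      (\<Sum>n=1..N. letter_term x n * H \<beta> (n - 1) + letter_term (letter_mult x y) n * H w (n - 1))" for N
    by (intro sum.cong refl)
      (simp add: Cons H_Cons_pred distrib_left letter_term_mult[symmetric] mult.assoc)
  then have "(\<Sum>n=1..N. letter_term x n * H \<beta> n) = H (x # \<beta>) N + H (letter_mult x y # w) N" for N
    by (simp only: sum.distrib H_Cons)
  then show ?thesis by (intro H_span_cong[OF H_span_add[OF H_span_H H_span_H]]) simp
qed

lemma H_span_weak_sum:
  assumes "H_span g"
  shows "H_span (\<lambda>N. \<Sum>n=1..N. letter_term x n * g n)"
  using assms
proof (rule H_span_linear_image[where T = "\<lambda>g N. \<Sum>n=1..N. letter_term x n * g n"])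
  show "H_span (\<lambda>N. \<Sum>n=1..N. letter_term x n * H w n)" for w
    by (rule H_span_weak_sum_H)
qed (simp_all add: sum.distrib sum_distrib_left distrib_left mult.left_commute)

(* Split according to whether the largest index of the first chain is larger than, smaller than
   or equal to that of the second (quasi-shuffle). *)
lemma H_Cons_mult_H_Cons:
  "H (x # a) N * H (y # b) N =
    (\<Sum>n=1..N. letter_term x n * (H a (n - 1) * H (y # b) (n - 1))
             + letter_term y n * (H (x # a) (n - 1) * H b (n - 1))
             + letter_term (letter_mult x y) n * (H a (n - 1) * H b (n - 1)))"
proof (induction N)
  case 0
  then show ?case by (simp add: H_Cons)
next
  case (Suc N)
  have "H (x # a) (Suc N) * H (y # b) (Suc N) =
      (H (x # a) N + letter_term x (Suc N) * H a N) * (H (y # b) N + letter_term y (Suc N) * H b N)"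
    using H_Cons_pred[of "Suc N"] by simp
  also have "\<dots> = H (x # a) N * H (y # b) N
      + (letter_term x (Suc N) * (H a N * H (y # b) N)
         + letter_term y (Suc N) * (H (x # a) N * H b N)
         + letter_term (letter_mult x y) (Suc N) * (H a N * H b N))"
    by (simp add: letter_term_mult[symmetric] algebra_simps)
  finally show ?case using Suc by simp
qed

lemma H_span_mult_H: "H_span (\<lambda>N. H a N * H b N)"
proof (induction "length a + length b" arbitrary: a b rule: less_induct)
  case less
  show ?case
  proof (cases a; cases b)
    fix x a' y b' assume a: "a = x # a'" and b: "b = y # b'"
    have "H_span (\<lambda>N. (\<Sum>n=1..N. letter_term x n * (H a' (n - 1) * H b (n - 1)))
        + (\<Sum>n=1..N. letter_term y n * (H a (n - 1) * H b' (n - 1)))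
        + (\<Sum>n=1..N. letter_term (letter_mult x y) n * (H a' (n - 1) * H b' (n - 1))))"
      using less a b by (intro H_span_add H_span_strict_sum) simp_all
    then show ?thesis
      by (rule H_span_cong) (simp add: a b H_Cons_mult_H_Cons sum.distrib)
  qed (use H_span_H H_span_const in \<open>simp_all add: H_Nil\<close>)
qed

lemma H_span_mult:
  assumes "H_span f" and "H_span g"
  shows "H_span (\<lambda>N. f N * g N)"
  using assms(1)
proof (rule H_span_linear_image[where T = "\<lambda>f N. f N * g N"])
  show "H_span (\<lambda>N. H w N * g N)" for w
    using assms(2)
    by (rule H_span_linear_image[where T = "\<lambda>g N. H w N * g N"])
      (simp_all add: H_span_mult_H distrib_left mult.left_commute)
qed (simp_all add: distrib_right mult.assoc)

lemma H_span_power: "H_span f \<Longrightarrow> H_span (\<lambda>N. f N ^ k)"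
  by (induction k) (simp_all add: H_span_const H_span_mult)

lemma H_span_prod:
  "finite I \<Longrightarrow> (\<And>i. i \<in> I \<Longrightarrow> H_span (g i)) \<Longrightarrow> H_span (\<lambda>N. \<Prod>i\<in>I. g i N)"
  by (induction I rule: finite_induct) (simp_all add: H_span_const H_span_mult)

lemma sum_div_eq_sum_dvd:
  fixes d N :: nat
  assumes "0 < d"
  shows "(\<Sum>n=1..N div d. \<phi> n) = (\<Sum>m=1..N. if d dvd m then \<phi> (m div d) else 0)"
proof -
  have multiples: "{m \<in> {1..N}. d dvd m} = (\<lambda>n. d * n) ` {1..N div d}"
    using assms by (auto simp: less_eq_div_iff_mult_less_eq mult.commute intro!: Suc_leI)
  have "(\<Sum>m=1..N. if d dvd m then \<phi> (m div d) else 0) =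
      (\<Sum>m\<in>{m \<in> {1..N}. d dvd m}. \<phi> (m div d))"
    by (rule sum.inter_filter[symmetric]) simp
  also have "\<dots> = (\<Sum>m\<in>(\<lambda>n. d * n) ` {1..N div d}. \<phi> (m div d))"
    unfolding multiples ..
  also have "\<dots> = (\<Sum>n=1..N div d. \<phi> n)"
    using assms by (simp add: sum.reindex inj_on_def)
  finally show ?thesis ..
qed

lemma sum_roots_of_unity_power:
  fixes d m :: nat
  assumes "0 < d"
  shows "(\<Sum>j<d. (exp (2 * of_real pi * \<i> / of_nat d) ^ j) ^ m) =
    (if d dvd m then of_nat d else (0::complex))"
proof -
  define u where "u = exp (2 * of_real pi * \<i> * of_nat m / of_nat d)"
  have "(exp (2 * of_real pi * \<i> / of_nat d) ^ j) ^ m = u ^ j" for j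
    by (simp add: u_def power_mult[symmetric] mult.commute[of j] power_mult
        exp_of_nat_mult[symmetric])
      (simp add: mult_ac)
  then have sum_eq: "(\<Sum>j<d. (exp (2 * of_real pi * \<i> / of_nat d) ^ j) ^ m) = (\<Sum>j<d. u ^ j)"
    by simp
  have u_eq_1: "u = 1 \<longleftrightarrow> d dvd m"
    unfolding u_def using assms by (simp add: complex_root_unity_eq_1)
  have "u ^ d = 1"
    unfolding u_def using assms by (simp add: complex_root_unity)
  then show ?thesis
    using sum_eq u_eq_1 by (cases "d dvd m") (simp_all add: geometric_sum)
qed

lemma ex_complex_nth_root: "0 < d \<Longrightarrow> \<exists>t::complex. t ^ d = s"
proof (cases "s = 0")
  case False
  assume "0 < d"
  then have "exp (Ln s / of_nat d) ^ d = exp (Ln s)"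
    by (simp add: exp_of_nat_mult[symmetric])
  then show ?thesis using False by auto
qed simp

lemma letter_term_dvd_filter:
  assumes "0 < d"
  obtains C ys where
    "\<And>m. 0 < m \<Longrightarrow>
      (\<Sum>j<d. C * letter_term (ys j) m) = (if d dvd m then letter_term x (m div d) else 0)"
proof -
  \<comment> \<open>Averaging (t \<omega>^j)^m over the d-th roots of unity \<omega>^j keeps exactly the m divisible by d.\<close>
  obtain t where t: "t ^ d = snd x" using ex_complex_nth_root[OF assms] by blast
  define \<omega> where "\<omega> = exp (2 * of_real pi * \<i> / of_nat d)"
  define C where "C = (of_nat d :: complex) powr fst x / of_nat d"
  have "(\<Sum>j<d. C * letter_term (fst x, t * \<omega> ^ j) m) =
      (if d dvd m then letter_term x (m div d) else 0)" if "0 < m" for m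
  proof -
    have "(\<Sum>j<d. C * letter_term (fst x, t * \<omega> ^ j) m) =
        C * t ^ m / of_nat m powr fst x * (\<Sum>j<d. (\<omega> ^ j) ^ m)"
      unfolding letter_term_def sum_distrib_left by (simp add: power_mult_distrib mult_ac)
    also have "\<dots> = C * t ^ m / of_nat m powr fst x * (if d dvd m then of_nat d else 0)"
      unfolding \<omega>_def sum_roots_of_unity_power[OF assms] ..
    also have "\<dots> = (if d dvd m then letter_term x (m div d) else 0)"
    proof (cases "d dvd m")
      case True
      then obtain k where m: "m = d * k" ..
      have "t ^ m = snd x ^ k" by (simp add: m power_mult t)
      moreover have "(of_nat m :: complex) powr fst x = of_nat d powr fst x * of_nat k powr fst x"
        by (simp add: m powr_times_real)
      ultimately show ?thesis
        using True assms by (simp add: m C_def letter_term_def field_simps)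
    qed simp
    finally show ?thesis .
  qed
  then show ?thesis by (rule that)
qed

lemma sum_dilated_letter_term:
  assumes "0 < d"
  obtains C ys where
    "\<And>N \<phi>. (\<Sum>n=1..N div d. letter_term x n * \<phi> (d * n)) =
            (\<Sum>j<d. C * (\<Sum>m=1..N. letter_term (ys j) m * \<phi> m))"
proof -
  obtain C ys where filter:
    "\<And>m. 0 < m \<Longrightarrow>
      (\<Sum>j<d. C * letter_term (ys j) m) = (if d dvd m then letter_term x (m div d) else 0)"
    using letter_term_dvd_filter[OF assms] by blast
  have "(\<Sum>n=1..N div d. letter_term x n * \<phi> (d * n)) =
      (\<Sum>j<d. C * (\<Sum>m=1..N. letter_term (ys j) m * \<phi> m))" for N \<phi>
  proof -
    have "(\<Sum>n=1..N div d. letter_term x n * \<phi> (d * n)) =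
        (\<Sum>m=1..N. (if d dvd m then letter_term x (m div d) else 0) * \<phi> m)"
      unfolding sum_div_eq_sum_dvd[OF assms] by (intro sum.cong) auto
    also have "\<dots> = (\<Sum>m=1..N. (\<Sum>j<d. C * letter_term (ys j) m) * \<phi> m)"
      by (intro sum.cong) (simp_all add: filter)
    also have "\<dots> = (\<Sum>j<d. C * (\<Sum>m=1..N. letter_term (ys j) m * \<phi> m))"
      unfolding sum_distrib_right sum_distrib_left by (subst sum.swap) (simp add: mult.assoc)
    finally show ?thesis .
  qed
  then show ?thesis by (rule that)
qed

lemma H_span_dilated_weak_sum:
  assumes "0 < d" and "H_span g"
  shows "H_span (\<lambda>N. \<Sum>n=1..N div d. letter_term x n * g (d * n))"
proof -
  obtain C ys where dil: "\<And>N \<phi>. (\<Sum>n=1..N div d. letter_term x n * \<phi> (d * n)) =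
      (\<Sum>j<d. C * (\<Sum>m=1..N. letter_term (ys j) m * \<phi> m))"
    using sum_dilated_letter_term[OF assms(1)] by blast
  show ?thesis
    unfolding dil by (intro H_span_sum finite_lessThan H_span_scale H_span_weak_sum assms(2))
qed

lemma H_span_dilated_strict_sum:
  assumes "0 < d" and "H_span g"
  shows "H_span (\<lambda>N. \<Sum>n=1..N div d. letter_term x n * g (d * n - 1))"
proof -
  obtain C ys where dil: "\<And>N \<phi>. (\<Sum>n=1..N div d. letter_term x n * \<phi> (d * n)) =
      (\<Sum>j<d. C * (\<Sum>m=1..N. letter_term (ys j) m * \<phi> m))"
    using sum_dilated_letter_term[OF assms(1)] by blast
  show ?thesis
    using dil[where \<phi> = "\<lambda>m. g (m - 1)"]
    by (simp only:) (intro H_span_sum finite_lessThan H_span_scale H_span_strict_sum assms(2))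
qed

lemma mult_minus_1_div:
  fixes d n :: nat
  assumes "0 < n" and "0 < d"
  shows "(d * n - 1) div d = n - 1"
proof -
  obtain k where k: "n = Suc k" using assms(1) by (cases n) auto
  then have "d * n - 1 = (d - 1) + d * k" using assms(2) by (cases d) auto
  also have "\<dots> div d = k" using assms(2) by (subst div_mult_self2) auto
  finally show ?thesis by (simp add: k)
qed

lemma H_span_H_div:
  assumes "0 < d"
  shows "H_span (\<lambda>N. H \<alpha> (N div d))"
proof (induction \<alpha>)
  case Nil
  show ?case by (simp add: H_Nil H_span_const)
next
  case (Cons x \<alpha>)
  have "H (x # \<alpha>) (N div d) = (\<Sum>n=1..N div d. letter_term x n * H \<alpha> ((d * n - 1) div d))" for N
    unfolding H_Cons using assms mult_minus_1_div by (intro sum.cong refl) simp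
  then show ?case
    by (intro H_span_cong[OF H_span_dilated_strict_sum[OF assms Cons]]) simp
qed

definition weak_chains :: "nat \<Rightarrow> nat \<Rightarrow> nat list set" where
  "weak_chains l k = {ns. length ns = l \<and> sorted ns \<and> set ns \<subseteq> {1..k}}"

definition nested_sum :: "(nat \<Rightarrow> nat \<Rightarrow> complex) \<Rightarrow> nat \<Rightarrow> nat \<Rightarrow> complex" where
  "nested_sum F l k = (\<Sum>ns\<in>weak_chains l k. \<Prod>i\<in>{1..l}. F i (ns ! (i - 1)))"

lemma finite_weak_chains: "finite (weak_chains l k)"
  by (rule finite_subset[OF _ finite_lists_length_eq[of "{1..k}" l]]) (auto simp: weak_chains_def)

lemma weak_chains_Suc:
  "weak_chains (Suc l) k = (\<lambda>(n, ns). ns @ [n]) ` (SIGMA n:{1..k}. weak_chains l n)"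
proof (intro equalityI subsetI)
  fix xs assume xs: "xs \<in> weak_chains (Suc l) k"
  then have "xs \<noteq> []" by (auto simp: weak_chains_def)
  then obtain ns n where "xs = ns @ [n]" by (cases xs rule: rev_cases) auto
  with xs show "xs \<in> (\<lambda>(n, ns). ns @ [n]) ` (SIGMA n:{1..k}. weak_chains l n)"
    unfolding weak_chains_def by (force simp: sorted_append subset_iff)
qed (auto simp: weak_chains_def sorted_append subset_iff)

lemma nested_sum_0: "nested_sum F 0 k = 1"
proof -
  have "weak_chains 0 k = {[]}" by (auto simp: weak_chains_def)
  then show ?thesis by (simp add: nested_sum_def)
qed

lemma nested_sum_Suc: "nested_sum F (Suc l) k = (\<Sum>n=1..k. F (Suc l) n * nested_sum F l n)"
proof -
  have inj: "inj_on (\<lambda>(n, ns). ns @ [n]) (SIGMA n:{1..k}. weak_chains l n)"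
    by (auto simp: inj_on_def)
  have snoc: "(\<Prod>i\<in>{1..Suc l}. F i ((snd p @ [fst p]) ! (i - 1))) =
      F (Suc l) (fst p) * (\<Prod>i\<in>{1..l}. F i (snd p ! (i - 1)))"
    if "p \<in> (SIGMA n:{1..k}. weak_chains l n)" for p
  proof -
    have len: "length (snd p) = l" using that by (auto simp: weak_chains_def)
    then have "(\<Prod>i\<in>{1..l}. F i ((snd p @ [fst p]) ! (i - 1))) =
        (\<Prod>i\<in>{1..l}. F i (snd p ! (i - 1)))"
      by (intro prod.cong) (auto simp: nth_append)
    then show ?thesis by (simp add: prod.cl_ivl_Suc nth_append len)
  qed
  have "nested_sum F (Suc l) k =
      (\<Sum>p\<in>(SIGMA n:{1..k}. weak_chains l n). \<Prod>i\<in>{1..Suc l}. F i ((snd p @ [fst p]) ! (i - 1)))"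
    unfolding nested_sum_def weak_chains_Suc sum.reindex[OF inj] comp_def case_prod_beta ..
  also have "\<dots> = (\<Sum>p\<in>(SIGMA n:{1..k}. weak_chains l n).
      F (Suc l) (fst p) * (\<Prod>i\<in>{1..l}. F i (snd p ! (i - 1))))"
    by (rule sum.cong[OF refl]) (rule snoc)
  also have "\<dots> = (\<Sum>n=1..k. F (Suc l) n * nested_sum F l n)"
    by (simp add: sum.Sigma finite_weak_chains nested_sum_def sum_distrib_left split_def)
  finally show ?thesis .
qed

lemma nested_sum_H_span:
  assumes "0 < L"
    and factors: "\<And>l. 1 \<le> l \<Longrightarrow> l \<le> r \<Longrightarrow>
      \<exists>x G. H_span G \<and> (\<forall>n. F l n = letter_term x n * G (L * n))"
  shows "\<exists>g. H_span g \<and> (\<forall>k. nested_sum F r k = g (L * k))"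
  using factors
proof (induction r)
  case 0
  show ?case using H_span_const[of 1] by (auto simp: nested_sum_0)
next
  case (Suc l)
  then obtain g where g: "H_span g" "\<And>k. nested_sum F l k = g (L * k)"
    by force
  obtain x G where G: "H_span G" "\<And>n. F (Suc l) n = letter_term x n * G (L * n)"
    using Suc.prems[of "Suc l"] by auto
  have "nested_sum F (Suc l) k =
      (\<Sum>n=1..(L * k) div L. letter_term x n * (G (L * n) * g (L * n)))" for k
    using assms(1) by (simp add: nested_sum_Suc G g mult.assoc)
  moreover have "H_span (\<lambda>N. \<Sum>n=1..N div L. letter_term x n * (G (L * n) * g (L * n)))"
    using H_span_dilated_weak_sum[OF assms(1) H_span_mult[OF G(1) g(1)]] .
  ultimately show ?case by blast
qed

lemma H_span_prod_H_multiples: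
  assumes "finite J" and "0 < L" and "\<And>j. j \<in> J \<Longrightarrow> 0 < p j \<and> p j dvd L"
  shows "\<exists>G. H_span G \<and> (\<forall>n. (\<Prod>j\<in>J. H (\<alpha> j) (p j * n) ^ e j) = G (L * n))"
proof (intro exI conjI allI)
  have cofactor: "0 < L div p j" "L * n div (L div p j) = p j * n" if "j \<in> J" for j n
    using assms(2) assms(3)[OF that] by (auto elim!: dvdE)
  show "H_span (\<lambda>N. \<Prod>j\<in>J. H (\<alpha> j) (N div (L div p j)) ^ e j)"
    using cofactor(1) by (intro H_span_prod assms(1) H_span_power H_span_H_div)
  show "(\<Prod>j\<in>J. H (\<alpha> j) (p j * n) ^ e j) =
      (\<Prod>j\<in>J. H (\<alpha> j) (L * n div (L div p j)) ^ e j)" for n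
    using cofactor(2) by (intro prod.cong) simp_all
qed

theorem theorem7p1:
  fixes r :: nat
    and z q :: "nat \<Rightarrow> complex"
    and m :: "nat \<Rightarrow> nat"
    and p e :: "nat \<Rightarrow> nat \<Rightarrow> nat"
    and \<alpha> :: "nat \<Rightarrow> nat \<Rightarrow> word"
    and F :: "nat \<Rightarrow> nat \<Rightarrow> complex"
    and L :: nat
    and S :: "nat \<Rightarrow> complex"
  assumes r_pos: "1 \<le> r"
    and p_pos: "\<And>l j. 1 \<le> l \<Longrightarrow> l \<le> r \<Longrightarrow> 1 \<le> j \<Longrightarrow> j \<le> m l \<Longrightarrow> 0 < p l j"
    and F_def: "\<And>l n. F l n = z l ^ n * ((of_nat n :: complex) powr q l) *
                  (\<Prod>j\<in>{1..m l}. H (\<alpha> l j) (p l j * n) ^ e l j)"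
    and L_def: "L = Lcm {p l j | l j. 1 \<le> l \<and> l \<le> r \<and> 1 \<le> j \<and> j \<le> m l}"
    and S_def: "\<And>k. S k = (\<Sum>ns\<in>{ns. length ns = r \<and> sorted ns \<and> set ns \<subseteq> {1..k}}.
                  \<Prod>l\<in>{1..r}. F l (ns!(l-1)))"
  shows "\<exists>B c. finite B \<and> (\<forall>k\<ge>1. S k = (\<Sum>\<beta>\<in>B. c \<beta> * H \<beta> (L * k)))"
proof -
  have "finite {p l j | l j. 1 \<le> l \<and> l \<le> r \<and> 1 \<le> j \<and> j \<le> m l}"
    by (rule finite_subset[of _ "(\<lambda>(l, j). p l j) ` (SIGMA l:{1..r}. {1..m l})"]) force+
  then have "L \<noteq> 0"
    unfolding L_def using p_pos by (subst Lcm_0_iff_nat) force+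
  then have L_pos: "0 < L" by simp
  have p_dvd_L: "p l j dvd L" if "1 \<le> l" "l \<le> r" "1 \<le> j" "j \<le> m l" for l j
    unfolding L_def using that by (intro dvd_Lcm) blast
  have "\<exists>x G. H_span G \<and> (\<forall>n. F l n = letter_term x n * G (L * n))" if "1 \<le> l" "l \<le> r" for l
  proof -
    have "0 < p l j \<and> p l j dvd L" if "j \<in> {1..m l}" for j
      using that \<open>1 \<le> l\<close> \<open>l \<le> r\<close> p_pos p_dvd_L by simp
    then obtain G where
      "H_span G" "\<And>n. (\<Prod>j\<in>{1..m l}. H (\<alpha> l j) (p l j * n) ^ e l j) = G (L * n)"
      using H_span_prod_H_multiples[OF finite_atLeastAtMost L_pos,
          where p = "p l" and \<alpha> = "\<alpha> l" and e = "e l"]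
      by blast
    then show ?thesis
      by (intro exI[of _ "(- q l, z l)"] exI[of _ G]) (simp add: F_def letter_term_neg)
  qed
  then obtain g where "H_span g" "\<And>k. nested_sum F r k = g (L * k)"
    using nested_sum_H_span[OF L_pos] by blast
  moreover have "S k = nested_sum F r k" for k
    unfolding S_def nested_sum_def weak_chains_def ..
  ultimately show ?thesis
    using H_span_finite_combination by metis
qed

end
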